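(* In the public project problem with equal participation costs, there is no anonymous feasible Groves mechanism that welfare dominates the VCG mechanism.
   Context: Public project problem (equal participation costs): $n\ge2$ players, decisions $D=\{0,1\}$, $\Theta_i=[0,c]$ with $c>0$, $v_i(d,\theta_i)=d(\theta_i-c/n)$; efficient decision $f(\theta)=1$ iff $\sum_i\theta_i\ge c$. A Groves mechanism has taxes $t_i(\theta)=\sum_{j\ne i}v_j(f(\theta),\theta_j)+h_i(\theta_{-i})$ for arbitrary $h_i$; player $i$'s utility is $v_i(f(\theta),\theta_i)+t_i(\theta)$. It is anonymous if all $h_i$ equal one function $h:[0,c]^{n-1}\to\mathbb{R}$ symmetric in its arguments. The VCG (Clarke) mechanism uses $h_i(\theta_{-i})=-\max_{d\in D}\sum_{j\ne i}v_j(d,\theta_j)$. Feasible: $\sum_it_i(\theta)\le0$ for all $\theta$. $t'$ welfare dominates $t$ if $\sum_i t_i(\theta)\le\sum_i t'_i(\theta)$ for all $\theta$, strictly for some $\theta$. *)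

theory Defs
  imports Main "HOL-Library.Multiset" Complex_Main
begin

text \<open>Players are indexed 0..n-1; a type profile is a real list of length n.
  Decisions D = {0,1} are represented as reals 0 and 1.\<close>

definition decisions :: "real set" where
  "decisions = {0, 1}"

definition type_space :: "nat \<Rightarrow> real \<Rightarrow> real list set" where
  "type_space n c = {\<theta>. length \<theta> = n \<and> set \<theta> \<subseteq> {0..c}}"

definition val :: "nat \<Rightarrow> real \<Rightarrow> real \<Rightarrow> real \<Rightarrow> real" where
  "val n c d x = d * (x - c / real n)"

definition eff_dec :: "real \<Rightarrow> real list \<Rightarrow> real" where
  "eff_dec c \<theta> = (if sum_list \<theta> \<ge> c then 1 else 0)"

definition others :: "real list \<Rightarrow> nat \<Rightarrow> real list" where
  "others \<theta> i = take i \<theta> @ drop (Suc i) \<theta>"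

definition groves_tax ::
  "nat \<Rightarrow> real \<Rightarrow> (nat \<Rightarrow> real list \<Rightarrow> real) \<Rightarrow> real list \<Rightarrow> nat \<Rightarrow> real" where
  "groves_tax n c hs \<theta> i =
     (\<Sum>j\<in>{0..<n} - {i}. val n c (eff_dec c \<theta>) (\<theta> ! j)) + hs i (others \<theta> i)"

definition total_tax ::
  "nat \<Rightarrow> real \<Rightarrow> (nat \<Rightarrow> real list \<Rightarrow> real) \<Rightarrow> real list \<Rightarrow> real" where
  "total_tax n c hs \<theta> = (\<Sum>i<n. groves_tax n c hs \<theta> i)"

definition symmetric_on :: "nat \<Rightarrow> real \<Rightarrow> (real list \<Rightarrow> real) \<Rightarrow> bool" where
  "symmetric_on n c h \<longleftrightarrow>
     (\<forall>xs ys. length xs = n - 1 \<and> set xs \<subseteq> {0..c} \<and> mset ys = mset xs \<longrightarrow> h ys = h xs)"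

definition anonymous :: "nat \<Rightarrow> real \<Rightarrow> (nat \<Rightarrow> real list \<Rightarrow> real) \<Rightarrow> bool" where
  "anonymous n c hs \<longleftrightarrow>
     (\<exists>h. symmetric_on n c h \<and> (\<forall>i<n. hs i = h))"

definition vcg_h :: "nat \<Rightarrow> real \<Rightarrow> nat \<Rightarrow> real list \<Rightarrow> real" where
  "vcg_h n c i xs = - Max ((\<lambda>d. \<Sum>x\<leftarrow>xs. val n c d x) ` decisions)"

definition feasible :: "nat \<Rightarrow> real \<Rightarrow> (nat \<Rightarrow> real list \<Rightarrow> real) \<Rightarrow> bool" where
  "feasible n c hs \<longleftrightarrow> (\<forall>\<theta>\<in>type_space n c. total_tax n c hs \<theta> \<le> 0)"

definition welfare_dominates ::
  "nat \<Rightarrow> real \<Rightarrow> (nat \<Rightarrow> real list \<Rightarrow> real) \<Rightarrow> (nat \<Rightarrow> real list \<Rightarrow> real) \<Rightarrow> bool" where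
  "welfare_dominates n c hs' hs \<longleftrightarrow>
     (\<forall>\<theta>\<in>type_space n c. total_tax n c hs \<theta> \<le> total_tax n c hs' \<theta>) \<and>
     (\<exists>\<theta>\<in>type_space n c. total_tax n c hs \<theta> < total_tax n c hs' \<theta>)"

end

theory Submission
  imports Defs
begin

(* Let hs be an anonymous Groves mechanism with common h, and put
   g = h - h_VCG.  The difference of the total taxes of hs and of VCG at a profile t
   is the sum over i of g(theta_{-i}).  Call t one-sided if the sums of the others'
   types are all at most, or all at least, the others' cost share (n-1)c/n; at such
   profiles the VCG budget is balanced, so feasibility and welfare dominance force
   the sum of g(theta_{-i}) to vanish.  Now fix x in [0,c]^(n-1) with sum below the
   cost share and let v = min x.  Every profile y @ [v] with y in [v,c]^(n-1) and
   sum y below the cost share is one-sided, and by symmetry of g this reads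
   g y + sum_i g(y[i:=v]) = 0.  Induction on the number of entries of y different
   from v gives g = 0 there, in particular g x = 0; the case of a sum above the cost
   share is symmetric with v = max x.  Hence g = 0 everywhere, so hs and VCG collect
   the same total tax at every profile, contradicting strict welfare dominance. *)

lemma sum_list_val: "(\<Sum>x\<leftarrow>xs. val n c d x) = d * (sum_list xs - real (length xs) * (c / real n))"
  by (induction xs) (auto simp: val_def algebra_simps)

lemma length_others: "i < length t \<Longrightarrow> length (others t i) = length t - 1"
  by (simp add: others_def)

lemma set_others: "set (others t i) \<subseteq> set t"
  unfolding others_def by (auto dest: in_set_takeD in_set_dropD)

lemma sum_list_others: "i < length (t::real list) \<Longrightarrow> sum_list (others t i) = sum_list t - t ! i"
  using arg_cong[OF id_take_nth_drop, of i t sum_list] by (simp add: others_def)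

lemma sum_list_update: "i < length (t::real list) \<Longrightarrow> sum_list (t[i := v]) = sum_list t - t ! i + v"
  using arg_cong[OF id_take_nth_drop, of i t sum_list]
  by (simp add: upd_conv_take_nth_drop algebra_simps)

lemma others_snoc_last: "others (y @ [v]) (length y) = y"
  by (simp add: others_def)

lemma mset_others_snoc: "i < length y \<Longrightarrow> mset (others (y @ [v]) i) = mset (y[i := v])"
  by (simp add: others_def upd_conv_take_nth_drop)

section \<open>VCG is budget balanced at one-sided profiles\<close>

definition others_cost :: "nat \<Rightarrow> real \<Rightarrow> real" where
  "others_cost n c = real (n - 1) * (c / real n)"

lemma vcg_groves_tax:
  assumes "length t = n" and "i < n"
  shows "groves_tax n c (vcg_h n c) t i =
    eff_dec c t * (sum_list (others t i) - others_cost n c) - max 0 (sum_list (others t i) - others_cost n c)"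
proof -
  have sum_others: "(\<Sum>j\<in>{0..<n} - {i}. t ! j) = sum_list (others t i)"
  proof -
    have "sum_list t = t ! i + (\<Sum>j\<in>{0..<n} - {i}. t ! j)"
      using sum.remove[of "{0..<n}" i "(!) t"] assms by (simp add: sum_list_sum_nth)
    then show ?thesis
      using sum_list_others[of i t] assms by simp
  qed
  have "(\<Sum>j\<in>{0..<n} - {i}. val n c d (t ! j))
      = d * (\<Sum>j\<in>{0..<n} - {i}. t ! j) - d * real (card ({0..<n} - {i})) * (c / real n)" for d
    by (simp add: val_def sum_subtractf sum_distrib_left right_diff_distrib)
  then have values_others:
      "(\<Sum>j\<in>{0..<n} - {i}. val n c d (t ! j)) = d * (sum_list (others t i) - others_cost n c)" for d
    using assms(2) by (simp add: sum_others others_cost_def right_diff_distrib mult.assoc)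
  have "length (others t i) = n - 1"
    using length_others[of i t] assms by simp
  then show ?thesis
    unfolding groves_tax_def vcg_h_def decisions_def values_others
    by (simp add: sum_list_val others_cost_def max_def)
qed

lemma sum_others_net_value:
  assumes "length (t::real list) = n" and "n \<ge> 1"
  shows "(\<Sum>i<n. sum_list (others t i) - others_cost n c) = real (n - 1) * (sum_list t - c)"
proof -
  have "(\<Sum>i<n. sum_list (others t i) - others_cost n c)
       = real n * sum_list t - (\<Sum>i<n. t ! i) - real n * others_cost n c"
    using assms(1) by (simp add: sum_list_others sum_subtractf)
  also have "(\<Sum>i<n. t ! i) = sum_list t"
    using assms(1) by (simp add: sum_list_sum_nth atLeast0LessThan)
  also have "real n * others_cost n c = real (n - 1) * c"
    using assms(2) by (simp add: others_cost_def)
  finally show ?thesis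
    using assms(2) by (simp add: of_nat_diff algebra_simps)
qed

lemma one_sided_clarke_sum:
  fixes b :: "nat \<Rightarrow> real"
  assumes sum_b: "(\<Sum>i<n. b i) = k * (s - c)" and "k > 0"
    and one_sided: "(\<forall>i<n. b i \<le> 0) \<or> (\<forall>i<n. b i \<ge> 0)"
  shows "(\<Sum>i<n. (if s \<ge> c then 1 else 0) * b i - max 0 (b i)) = 0"
  using one_sided
proof
  assume "\<forall>i<n. b i \<le> 0"
  then have "(\<Sum>i<n. b i) \<le> 0" and "(\<Sum>i<n. max 0 (b i)) = 0"
    by (auto intro: sum_nonpos)
  then show ?thesis
    using sum_b \<open>k > 0\<close>
    by (auto simp: sum_subtractf sum_distrib_left[symmetric] mult_le_0_iff)
next
  assume "\<forall>i<n. b i \<ge> 0"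
  then have "(\<Sum>i<n. b i) \<ge> 0" and "(\<Sum>i<n. max 0 (b i)) = (\<Sum>i<n. b i)"
    by (auto intro: sum_nonneg)
  then show ?thesis
    using sum_b \<open>k > 0\<close>
    by (auto simp: sum_subtractf sum_distrib_left[symmetric] zero_le_mult_iff)
qed

lemma vcg_budget_balanced:
  assumes "length t = n" and "n \<ge> 2"
    and "(\<forall>i<n. sum_list (others t i) \<le> others_cost n c) \<or> (\<forall>i<n. sum_list (others t i) \<ge> others_cost n c)"
  shows "total_tax n c (vcg_h n c) t = 0"
proof -
  have "total_tax n c (vcg_h n c) t =
      (\<Sum>i<n. eff_dec c t * (sum_list (others t i) - others_cost n c) - max 0 (sum_list (others t i) - others_cost n c))"
    unfolding total_tax_def using assms(1) by (simp add: vcg_groves_tax)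
  also have "\<dots> = 0"
    unfolding eff_dec_def
    by (rule one_sided_clarke_sum[where k = "real (n - 1)"])
       (use assms sum_others_net_value[OF assms(1)] in auto)
  finally show ?thesis .
qed

section \<open>Vanishing by replacement\<close>

lemma vanish_by_replacement:
  fixes g :: "real list \<Rightarrow> real"
  assumes v: "v \<in> S"
    and closed: "\<And>x i. P x \<Longrightarrow> set x \<subseteq> S \<Longrightarrow> i < length x \<Longrightarrow> P (x[i := v])"
    and balance: "\<And>x. length x = m \<Longrightarrow> set x \<subseteq> S \<Longrightarrow> P x \<Longrightarrow> g x + (\<Sum>i<m. g (x[i := v])) = 0"
  shows "length x = m \<Longrightarrow> set x \<subseteq> S \<Longrightarrow> P x \<Longrightarrow> g x = 0"
proof (induction "card {i. i < m \<and> x ! i \<noteq> v}" arbitrary: x rule: less_induct)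
  case less
  have replaced: "g (x[i := v]) = (if x ! i = v then g x else 0)" if "i < m" for i
  proof (cases "x ! i = v")
    case True
    then have "x[i := v] = x" by (metis list_update_id)
    then show ?thesis using True by simp
  next
    case False
    have "{j. j < m \<and> x[i := v] ! j \<noteq> v} = {j. j < m \<and> x ! j \<noteq> v} - {i}"
      using less.prems(1) \<open>i < m\<close> by (auto simp: nth_list_update)
    moreover have "card ({j. j < m \<and> x ! j \<noteq> v} - {i}) < card {j. j < m \<and> x ! j \<noteq> v}"
      by (rule card_Diff1_less) (use \<open>i < m\<close> False in auto)
    moreover have "set (x[i := v]) \<subseteq> S"
      using less.prems(2) v set_update_subset_insert by fastforce
    moreover have "P (x[i := v])"
      using closed less.prems \<open>i < m\<close> by simp
    ultimately show ?thesis
      using less.hyps less.prems(1) False by simp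
  qed
  have "(\<Sum>i<m. g (x[i := v])) = (\<Sum>i\<in>{i\<in>{..<m}. x ! i = v}. g x)"
    using sum.inter_filter[of "{..<m}" "\<lambda>_. g x" "\<lambda>i. x ! i = v"] by (simp add: replaced)
  then have "(1 + real (card {i\<in>{..<m}. x ! i = v})) * g x = 0"
    using balance[OF less.prems] by (simp add: algebra_simps)
  moreover have "1 + real (card {i\<in>{..<m}. x ! i = v}) \<noteq> 0"
    by (simp add: add_pos_nonneg)
  ultimately show ?case by simp
qed

text \<open>For a symmetric g, the replacement balance is exactly the statement that g
  sums to zero over the reduced profiles of the profile \<open>y @ [v]\<close>.\<close>

lemma vanish_by_extension:
  fixes g :: "real list \<Rightarrow> real"
  assumes sym: "symmetric_on (Suc m) c g"
    and v: "v \<in> S" and S: "S \<subseteq> {0..c}"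
    and closed: "\<And>y i. P y \<Longrightarrow> set y \<subseteq> S \<Longrightarrow> i < length y \<Longrightarrow> P (y[i := v])"
    and extension: "\<And>y. length y = m \<Longrightarrow> set y \<subseteq> S \<Longrightarrow> P y \<Longrightarrow> (\<Sum>i<Suc m. g (others (y @ [v]) i)) = 0"
    and x: "length x = m" "set x \<subseteq> S" "P x"
  shows "g x = 0"
proof (rule vanish_by_replacement[of v S P m g, OF v closed _ x])
  fix y assume y: "length y = m" "set y \<subseteq> S" "P y"
  have "g (others (y @ [v]) i) = g (y[i := v])" if "i < m" for i
  proof -
    have "set (y[i := v]) \<subseteq> {0..c}"
      using set_update_subset_insert[of y i v] y(2) v S by blast
    then show ?thesis
      using sym mset_others_snoc[of i y v] y(1) \<open>i < m\<close> unfolding symmetric_on_def by simp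
  qed
  then have "(\<Sum>i<Suc m. g (others (y @ [v]) i)) = g y + (\<Sum>i<m. g (y[i := v]))"
    using others_snoc_last[of y v] y(1) by (simp add: add.commute)
  then show "g y + (\<Sum>i<m. g (y[i := v])) = 0"
    using extension[OF y] by simp
qed

text \<open>Below a one extends by the
  minimum entry, above a by the maximum entry.\<close>

lemma vanish_below_level:
  fixes g :: "real list \<Rightarrow> real"
  assumes sym: "symmetric_on (Suc m) c g"
    and zero: "\<And>t. t \<in> type_space (Suc m) c \<Longrightarrow> \<forall>i<Suc m. sum_list (others t i) \<le> a \<Longrightarrow>
                   (\<Sum>i<Suc m. g (others t i)) = 0"
    and x: "length x = m" "set x \<subseteq> {0..c}" "sum_list x \<le> a" "x \<noteq> []"
  shows "g x = 0"
proof -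
  define v where "v = Min (set x)"
  have "v \<in> set x" using x(4) unfolding v_def by simp
  then have v: "v \<in> {0..c}" using x(2) by blast
  have v_min: "\<forall>z\<in>set x. v \<le> z" unfolding v_def by simp
  show ?thesis
  proof (rule vanish_by_extension[where v = v and S = "{v..c}" and P = "\<lambda>y. sum_list y \<le> a", OF sym])
    fix y assume y: "length y = m" "set y \<subseteq> {v..c}" "sum_list y \<le> a"
    let ?t = "y @ [v]"
    have "?t \<in> type_space (Suc m) c"
      using y v by (auto simp: type_space_def)
    moreover have "sum_list (others ?t i) \<le> a" if "i < Suc m" for i
      using nth_mem[of i ?t] that y v by (auto simp: sum_list_others)
    ultimately show "(\<Sum>i<Suc m. g (others ?t i)) = 0"
      using zero by blast
  next
    show "sum_list (y[i := v]) \<le> a" if "sum_list y \<le> a" "set y \<subseteq> {v..c}" "i < length y" for y i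
    proof -
      have "y ! i \<in> {v..c}" using that(2,3) nth_mem by blast
      then show ?thesis using that(1,3) by (simp add: sum_list_update)
    qed
  qed (use v v_min x in auto)
qed

lemma vanish_above_level:
  fixes g :: "real list \<Rightarrow> real"
  assumes sym: "symmetric_on (Suc m) c g"
    and zero: "\<And>t. t \<in> type_space (Suc m) c \<Longrightarrow> \<forall>i<Suc m. sum_list (others t i) \<ge> a \<Longrightarrow>
                   (\<Sum>i<Suc m. g (others t i)) = 0"
    and x: "length x = m" "set x \<subseteq> {0..c}" "sum_list x \<ge> a" "x \<noteq> []"
  shows "g x = 0"
proof -
  define v where "v = Max (set x)"
  have "v \<in> set x" using x(4) unfolding v_def by simp
  then have v: "v \<in> {0..c}" using x(2) by blast
  have v_max: "\<forall>z\<in>set x. z \<le> v" unfolding v_def by simp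
  show ?thesis
  proof (rule vanish_by_extension[where v = v and S = "{0..v}" and P = "\<lambda>y. sum_list y \<ge> a", OF sym])
    fix y assume y: "length y = m" "set y \<subseteq> {0..v}" "sum_list y \<ge> a"
    let ?t = "y @ [v]"
    have "?t \<in> type_space (Suc m) c"
      using y v by (auto simp: type_space_def)
    moreover have "sum_list (others ?t i) \<ge> a" if "i < Suc m" for i
      using nth_mem[of i ?t] that y v by (auto simp: sum_list_others)
    ultimately show "(\<Sum>i<Suc m. g (others ?t i)) = 0"
      using zero by blast
  next
    show "sum_list (y[i := v]) \<ge> a" if "sum_list y \<ge> a" "set y \<subseteq> {0..v}" "i < length y" for y i
    proof -
      have "y ! i \<in> {0..v}" using that(2,3) nth_mem by blast
      then show ?thesis using that(1,3) by (simp add: sum_list_update)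
    qed
  qed (use v v_max x in auto)
qed

section \<open>Anonymous Groves mechanisms compared with VCG\<close>

lemma total_tax_minus_vcg:
  assumes "\<forall>i<n. hs i = h"
  shows "total_tax n c hs t - total_tax n c (vcg_h n c) t =
         (\<Sum>i<n. h (others t i) - vcg_h n c 0 (others t i))"
  unfolding total_tax_def sum_subtractf[symmetric]
  using assms by (intro sum.cong) (simp_all add: groves_tax_def vcg_h_def)

text \<open>The Clarke term depends only on the sum and the length of the reduced profile,
  so subtracting it preserves symmetry.\<close>

lemma symmetric_on_minus_vcg:
  assumes "symmetric_on n c h"
  shows "symmetric_on n c (\<lambda>xs. h xs - vcg_h n c 0 xs)"
  unfolding symmetric_on_def
proof (intro allI impI)
  fix xs ys :: "real list"
  assume perm: "length xs = n - 1 \<and> set xs \<subseteq> {0..c} \<and> mset ys = mset xs"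
  then have "h ys = h xs"
    using assms unfolding symmetric_on_def by blast
  moreover have "length ys = length xs"
    using perm by (metis size_mset)
  moreover have "sum_list ys = sum_list xs"
    using perm by (metis sum_mset_sum_list)
  ultimately show "h ys - vcg_h n c 0 ys = h xs - vcg_h n c 0 xs"
    by (simp add: vcg_h_def sum_list_val)
qed

theorem lemma3:
  fixes n :: nat and c :: real
  assumes "n \<ge> 2" and "c > 0"
  shows "\<not> (\<exists>hs. anonymous n c hs \<and> feasible n c hs \<and> welfare_dominates n c hs (vcg_h n c))"
proof
  assume "\<exists>hs. anonymous n c hs \<and> feasible n c hs \<and> welfare_dominates n c hs (vcg_h n c)"
  then obtain hs h where sym: "symmetric_on n c h" and common: "\<forall>i<n. hs i = h"
    and feasible: "feasible n c hs" and dominates: "welfare_dominates n c hs (vcg_h n c)"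
    unfolding anonymous_def by blast
  define g where "g xs = h xs - vcg_h n c 0 xs" for xs
  define m where "m = n - 1"
  have n: "n = Suc m" and "m \<noteq> 0"
    using assms(1) unfolding m_def by auto
  have surplus: "total_tax n c hs t - total_tax n c (vcg_h n c) t = (\<Sum>i<n. g (others t i))" for t
    unfolding g_def by (rule total_tax_minus_vcg[OF common])
  have balanced: "(\<Sum>i<n. g (others t i)) = 0"
    if t: "t \<in> type_space n c"
      and "(\<forall>i<n. sum_list (others t i) \<le> others_cost n c) \<or> (\<forall>i<n. sum_list (others t i) \<ge> others_cost n c)" for t
  proof -
    have "total_tax n c (vcg_h n c) t = 0"
      using vcg_budget_balanced[OF _ assms(1) that(2)] t by (simp add: type_space_def)
    moreover have "total_tax n c hs t \<le> 0" and "total_tax n c (vcg_h n c) t \<le> total_tax n c hs t"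
      using feasible dominates t unfolding feasible_def welfare_dominates_def by blast+
    ultimately show ?thesis
      using surplus[of t] by simp
  qed
  have g_symmetric: "symmetric_on (Suc m) c g"
    using symmetric_on_minus_vcg[OF sym] n unfolding g_def by simp
  have g_zero: "g (others t i) = 0" if "t \<in> type_space n c" "i < n" for t i
  proof -
    have reduced: "length (others t i) = m" "set (others t i) \<subseteq> {0..c}" "others t i \<noteq> []"
      using that length_others[of i t] set_others[of t i] n \<open>m \<noteq> 0\<close> by (auto simp: type_space_def)
    show ?thesis
    proof (cases "sum_list (others t i) \<le> others_cost n c")
      case True
      then show ?thesis
        using vanish_below_level[OF g_symmetric _ reduced(1,2) True reduced(3)] balanced n by blast
    next
      case False
      then have "sum_list (others t i) \<ge> others_cost n c" by simp
      then show ?thesis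
        using vanish_above_level[OF g_symmetric _ reduced(1,2) _ reduced(3)] balanced n by blast
    qed
  qed
  obtain t where "t \<in> type_space n c" and "total_tax n c (vcg_h n c) t < total_tax n c hs t"
    using dominates unfolding welfare_dominates_def by blast
  then show False
    using surplus[of t] g_zero by simp
qed

end
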